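(* Let $\Psi:\mathbb{R}^n\to\mathbb{R}$ be convex and twice continuously differentiable, let $s:\mathbb{R}^n\to\mathbb{R}^m$ ($m\ge n$) have continuously differentiable component functions with Jacobian $J(x)\in\mathbb{R}^{m\times n}$, let $b\in\mathbb{R}^m$, $\sigma>0$, and $c(x)=\frac12\|s(x)-b\|^2-\frac{\sigma^2}{2}$, so $\nabla c(x)=J(x)^T(s(x)-b)$. Let $(x^*,\lambda^* )\in\mathbb{R}^n\times\mathbb{R}$ with $\lambda^*>0$ satisfy $$\nabla\Psi(x^* )+\lambda^*\nabla c(x^* )=0,\qquad c(x^* )=0,$$ with $\nabla c(x^* )\neq0$, and suppose the matrix $\nabla^2\Psi(x^* )+\lambda^*J(x^* )^TJ(x^* )$ is positive definite. Then there exists an open ball $\mathcal{B}_\rho(x^* )$ with center $x^*$ and radius $\rho>0$ such that for every $x\in\mathcal{B}_\rho(x^* )$ there exists $(p,\lambda)\in\mathbb{R}^n\times\mathbb{R}$ with $\lambda>0$ solving $$\nabla\Psi(x+p)+\lambda\big(\nabla c(x)+J(x)^TJ(x)p\big)=0,\qquad c(x)+\nabla c(x)^Tp+\tfrac12 p^TJ(x)^TJ(x)p=0.$$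
   Context: $\|\cdot\|$ is the Euclidean norm. The second system expresses the KKT conditions of the sub-problem $\min_p\Psi(x+p)$ subject to $\frac12\|J(x)p+s(x)-b\|^2=\frac{\sigma^2}{2}$. *)

theory Defs
  imports "HOL-Analysis.Analysis"
begin

definition pos_def_mat :: "real ^'n ^'n \<Rightarrow> bool" where
  "pos_def_mat A \<longleftrightarrow> (\<forall>x. x \<noteq> 0 \<longrightarrow> x \<bullet> (A *v x) > 0)"

definition cfun :: "('a \<Rightarrow> real ^'m) \<Rightarrow> real ^'m \<Rightarrow> real \<Rightarrow> 'a \<Rightarrow> real" where
  "cfun s b \<sigma> x = (1/2) * (norm (s x - b))^2 - \<sigma>^2 / 2"

end

theory Submission
  imports Defs
begin

(* The KKT system of the subproblem at x reads F(x, p, lambda) = 0 for a continuous F with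
   F(xs, 0, lamS) = 0. Its derivative in (p, lambda) there is the bordered matrix
   [[Hess Psi(xs) + lamS J^T J, grad c(xs)], [grad c(xs)^T, 0]], which is nonsingular because
   the upper left block is positive definite and grad c(xs) is nonzero. Such a regular zero of
   F(xs, -) persists when x moves: for x near xs, the Newton-type map y - A^-1 F(x, y) sends a
   small ball around (0, lamS) into itself, so Brouwer's fixed point theorem gives a zero, and
   its lambda-component stays close to lamS > 0. Only existence is claimed, so no implicit
   function theorem (and no differentiability in x) is needed. *)

lemma newton_step_halves_distance:
  fixes f :: "'a::real_normed_vector \<Rightarrow> 'b::real_normed_vector"
  assumes deriv: "(f has_derivative A) (at y0)" and zero: "f y0 = 0"
    and B: "bounded_linear B" and left_inverse: "\<And>z. B (A z) = z"
  obtains d where "d > 0"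
    and "\<And>y. norm (y - y0) < d \<Longrightarrow> norm (y - y0 - B (f y)) \<le> norm (y - y0) / 2"
proof -
  obtain K where K: "K > 0" "\<And>z. norm (B z) \<le> norm z * K"
    using bounded_linear.pos_bounded[OF B] by blast
  have "1 / (2 * K) > 0"
    using K(1) by simp
  then obtain d where "d > 0" and d: "\<And>y. norm (y - y0) < d \<Longrightarrow>
      norm (f y - f y0 - A (y - y0)) \<le> 1 / (2 * K) * norm (y - y0)"
    using deriv unfolding has_derivative_at_alt by blast
  have "norm (y - y0 - B (f y)) \<le> norm (y - y0) / 2" if "norm (y - y0) < d" for y
  proof -
    have "y - y0 - B (f y) = B (A (y - y0) - f y)"
      using left_inverse by (simp add: linear_diff[OF bounded_linear.linear[OF B]])
    also have "norm \<dots> \<le> norm (f y - f y0 - A (y - y0)) * K"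
      using K(2) zero by (metis norm_minus_commute diff_zero)
    also have "\<dots> \<le> 1 / (2 * K) * norm (y - y0) * K"
      using d[OF that] K(1) by (intro mult_right_mono) simp_all
    also have "\<dots> = norm (y - y0) / 2"
      using K(1) by simp
    finally show ?thesis .
  qed
  with \<open>d > 0\<close> that show ?thesis by blast
qed

lemma uniform_continuity_in_parameter:
  fixes G :: "'a::heine_borel \<times> 'b::metric_space \<Rightarrow> 'c::metric_space"
  assumes cont: "continuous_on UNIV G" and "compact K" and "e > 0"
  obtains \<delta> where "\<delta> > 0"
    and "\<And>x y. dist x a < \<delta> \<Longrightarrow> y \<in> K \<Longrightarrow> dist (G (x, y)) (G (a, y)) < e"
proof -
  have "uniformly_continuous_on (cball a 1 \<times> K) G"
    using \<open>compact K\<close>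
    by (intro compact_uniformly_continuous continuous_on_subset[OF cont]) (auto intro: compact_Times)
  then obtain d where "d > 0" and d: "\<And>u v. u \<in> cball a 1 \<times> K \<Longrightarrow> v \<in> cball a 1 \<times> K \<Longrightarrow>
      dist v u < d \<Longrightarrow> dist (G v) (G u) < e"
    using \<open>e > 0\<close> unfolding uniformly_continuous_on_def by blast
  show ?thesis
  proof (rule that[of "min 1 d"])
    fix x y assume "dist x a < min 1 d" "y \<in> K"
    then show "dist (G (x, y)) (G (a, y)) < e"
      by (intro d) (auto simp: dist_Pair_Pair dist_commute)
  qed (use \<open>d > 0\<close> in simp)
qed

lemma regular_zero_persists:
  fixes G :: "'a::heine_borel \<times> 'b::euclidean_space \<Rightarrow> 'b"
  assumes cont: "continuous_on UNIV G" and zero: "G (x0, y0) = 0"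
    and deriv: "((\<lambda>y. G (x0, y)) has_derivative A) (at y0)" and "inj A" and "\<epsilon> > 0"
  obtains \<delta> where "\<delta> > 0" and "\<And>x. x \<in> ball x0 \<delta> \<Longrightarrow> \<exists>y\<in>cball y0 \<epsilon>. G (x, y) = 0"
proof -
  have "linear A"
    using deriv has_derivative_linear by blast
  then obtain B where "linear B" and BA: "\<And>z. B (A z) = z" and AB: "\<And>z. A (B z) = z"
    using \<open>inj A\<close> linear_injective_isomorphism by blast
  then have B: "bounded_linear B"
    by (simp add: linear_conv_bounded_linear)
  obtain K where K: "K > 0" "\<And>z. norm (B z) \<le> norm z * K"
    using bounded_linear.pos_bounded[OF B] by blast
  obtain d where "d > 0" and newton: "\<And>y. norm (y - y0) < d \<Longrightarrow>
      norm (y - y0 - B (G (x0, y))) \<le> norm (y - y0) / 2"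
    using newton_step_halves_distance[OF deriv zero B BA] by blast
  define r where "r = min \<epsilon> (d / 2)"
  have r: "0 < r" "r \<le> \<epsilon>" "r < d"
    using \<open>d > 0\<close> \<open>\<epsilon> > 0\<close> by (auto simp: r_def)
  obtain \<delta> where "\<delta> > 0" and close: "\<And>x y. dist x x0 < \<delta> \<Longrightarrow> y \<in> cball y0 r \<Longrightarrow>
      dist (G (x, y)) (G (x0, y)) < r / (2 * K)"
    using uniform_continuity_in_parameter[OF cont compact_cball[of y0 r], where e = "r / (2 * K)" and a = x0]
      r K(1) by auto
  have "\<exists>y\<in>cball y0 \<epsilon>. G (x, y) = 0" if x: "x \<in> ball x0 \<delta>" for x
  proof -
    define N where "N y = y - B (G (x, y))" for y
    have "N y \<in> cball y0 r" if y: "y \<in> cball y0 r" for y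
    proof -
      have "norm (y - y0 - B (G (x0, y))) \<le> r / 2"
        using newton[of y] y r by (simp add: dist_norm norm_minus_commute)
      moreover have "norm (B (G (x, y) - G (x0, y))) \<le> r / 2"
      proof -
        have "norm (G (x, y) - G (x0, y)) < r / (2 * K)"
          using close[of x y] x y by (simp add: dist_norm dist_commute)
        have "norm (B (G (x, y) - G (x0, y))) \<le> norm (G (x, y) - G (x0, y)) * K"
          by (rule K(2))
        also have "\<dots> \<le> r / (2 * K) * K"
          using \<open>norm (G (x, y) - G (x0, y)) < r / (2 * K)\<close> K(1) by (intro mult_right_mono) simp_all
        also have "\<dots> = r / 2"
          using K(1) by simp
        finally show ?thesis .
      qed
      moreover have "N y - y0 = (y - y0 - B (G (x0, y))) - B (G (x, y) - G (x0, y))"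
        by (simp add: N_def linear_diff[OF \<open>linear B\<close>])
      then have "norm (N y - y0) \<le> norm (y - y0 - B (G (x0, y))) + norm (B (G (x, y) - G (x0, y)))"
        by (metis norm_triangle_ineq4)
      ultimately have "norm (N y - y0) \<le> r"
        by linarith
      then show ?thesis
        by (simp add: dist_norm norm_minus_commute)
    qed
    moreover have "continuous_on (cball y0 r) N"
      unfolding N_def
      by (intro continuous_intros bounded_linear.continuous_on[OF B] continuous_on_compose2[OF cont]) auto
    ultimately obtain y where y: "y \<in> cball y0 r" "N y = y"
      using brouwer_ball[OF \<open>0 < r\<close>, of y0 N] by blast
    then have "G (x, y) = 0"
      using AB[of "G (x, y)"] linear_0[OF \<open>linear A\<close>] by (simp add: N_def)
    with y r show ?thesis by auto
  qed
  with \<open>\<delta> > 0\<close> that show ?thesis by (auto simp: dist_commute)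
qed

lemma continuous_on_matrix_vector_mult [continuous_intros]:
  fixes A :: "'a::topological_space \<Rightarrow> real^'n^'m"
  assumes "continuous_on S A" "continuous_on S v"
  shows "continuous_on S (\<lambda>x. A x *v v x)"
  unfolding matrix_vector_mult_def by (intro continuous_intros assms)

lemma continuous_on_transpose [continuous_intros]:
  fixes A :: "'a::topological_space \<Rightarrow> real^'n^'m"
  assumes "continuous_on S A"
  shows "continuous_on S (\<lambda>x. transpose (A x))"
  unfolding transpose_def by (intro continuous_intros assms)

lemma continuous_on_matrix_matrix_mult [continuous_intros]:
  fixes A :: "'a::topological_space \<Rightarrow> real^'n^'m" and B :: "'a \<Rightarrow> real^'k^'n"
  assumes "continuous_on S A" "continuous_on S B"
  shows "continuous_on S (\<lambda>x. A x ** B x)"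
  unfolding matrix_matrix_mult_def by (intro continuous_intros assms)

lemma bordered_pos_def_injective:
  fixes M :: "real^'n^'n"
  assumes M: "pos_def_mat M" and "g \<noteq> 0"
  shows "inj (\<lambda>(u, \<mu>). (M *v u + \<mu> *\<^sub>R g, g \<bullet> u))"
proof -
  have "u = 0 \<and> \<mu> = 0" if "M *v u + \<mu> *\<^sub>R g = 0" and "g \<bullet> u = 0" for u \<mu>
  proof -
    have "u \<bullet> (M *v u) = - \<mu> * (g \<bullet> u)"
      using that(1) by (simp add: eq_neg_iff_add_eq_0[symmetric] inner_commute)
    with M that(2) have "u = 0"
      unfolding pos_def_mat_def by (metis less_irrefl mult_zero_right)
    with that(1) \<open>g \<noteq> 0\<close> show ?thesis
      by simp
  qed
  moreover have "linear (\<lambda>(u, \<mu>). (M *v u + \<mu> *\<^sub>R g, g \<bullet> u))"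
    by (rule linearI) (auto simp: matrix_vector_right_distrib inner_add_right algebra_simps)
  ultimately show ?thesis
    by (auto simp: linear_injective_0 zero_prod_def)
qed

(* The residual of the KKT system of min Psi (x + p) subject to the quadratic model
   c x + g x . p + p . Q x p / 2 = 0 of the constraint; the theorem uses g x = J x^T (s x - b)
   and Q x = J x^T J x. *)
definition subproblem_kkt ::
  "(real^'n \<Rightarrow> real^'n) \<Rightarrow> (real^'n \<Rightarrow> real^'n) \<Rightarrow> (real^'n \<Rightarrow> real^'n^'n) \<Rightarrow> (real^'n \<Rightarrow> real)
    \<Rightarrow> real^'n \<Rightarrow> (real^'n) \<times> real \<Rightarrow> (real^'n) \<times> real" where
  "subproblem_kkt gPsi g Q c x y =
    (gPsi (x + fst y) + snd y *\<^sub>R (g x + Q x *v fst y),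
     c x + g x \<bullet> fst y + 1/2 * (fst y \<bullet> (Q x *v fst y)))"

lemma subproblem_kkt_has_derivative:
  assumes "(gPsi has_derivative (\<lambda>h. H *v h)) (at x)"
  shows "(subproblem_kkt gPsi g Q c x has_derivative
      (\<lambda>(u, \<mu>). ((H + l *\<^sub>R Q x) *v u + \<mu> *\<^sub>R g x, g x \<bullet> u))) (at (0, l))"
proof -
  have "((\<lambda>y. x + fst y) has_derivative fst) (at (0, l))"
    by (auto intro!: derivative_eq_intros)
  from has_derivative_compose[OF this, of gPsi] assms
  have "((\<lambda>y. gPsi (x + fst y)) has_derivative (\<lambda>h. H *v fst h)) (at (0, l))"
    by simp
  then have "(subproblem_kkt gPsi g Q c x has_derivative
      (\<lambda>(u, \<mu>). (H *v u + l *\<^sub>R (Q x *v u) + \<mu> *\<^sub>R g x, g x \<bullet> u))) (at (0, l))"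
    unfolding subproblem_kkt_def [abs_def]
    by (auto intro!: derivative_eq_intros bounded_linear.has_derivative[OF matrix_vector_mul_bounded_linear]
        simp: case_prod_beta algebra_simps)
  then show ?thesis
    by (simp add: matrix_vector_mult_add_rdistrib scaleR_matrix_vector_assoc)
qed

lemma continuous_on_subproblem_kkt:
  assumes "continuous_on UNIV gPsi" "continuous_on UNIV g" "continuous_on UNIV Q"
    and "continuous_on UNIV c"
  shows "continuous_on UNIV (\<lambda>z. subproblem_kkt gPsi g Q c (fst z) (snd z))"
  unfolding subproblem_kkt_def
  by (intro continuous_intros continuous_on_compose2[OF assms(1)] continuous_on_compose2[OF assms(2)]
      continuous_on_compose2[OF assms(3)] continuous_on_compose2[OF assms(4)]) auto

lemma subproblem_kkt_solvable_near:
  fixes gPsi :: "real^'n \<Rightarrow> real^'n"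
  assumes "continuous_on UNIV gPsi" "continuous_on UNIV g" "continuous_on UNIV Q"
    and "continuous_on UNIV c"
    and deriv: "(gPsi has_derivative (\<lambda>h. H *v h)) (at x0)"
    and kkt: "subproblem_kkt gPsi g Q c x0 (0, l0) = 0" and "l0 > 0"
    and posdef: "pos_def_mat (H + l0 *\<^sub>R Q x0)" and grad: "g x0 \<noteq> 0"
  obtains \<rho> where "\<rho> > 0"
    and "\<And>x. x \<in> ball x0 \<rho> \<Longrightarrow> \<exists>p l. l > 0 \<and> subproblem_kkt gPsi g Q c x (p, l) = 0"
proof -
  define G where "G z = subproblem_kkt gPsi g Q c (fst z) (snd z)" for z
  have "continuous_on UNIV G"
    unfolding G_def using assms(1-4) by (rule continuous_on_subproblem_kkt)
  moreover have "G (x0, 0, l0) = 0"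
    using kkt by (simp add: G_def)
  moreover have "((\<lambda>y. G (x0, y)) has_derivative
      (\<lambda>(u, \<mu>). ((H + l0 *\<^sub>R Q x0) *v u + \<mu> *\<^sub>R g x0, g x0 \<bullet> u))) (at (0, l0))"
    using subproblem_kkt_has_derivative[OF deriv] by (simp add: G_def [abs_def])
  moreover have "inj (\<lambda>(u, \<mu>). ((H + l0 *\<^sub>R Q x0) *v u + \<mu> *\<^sub>R g x0, g x0 \<bullet> u))"
    using bordered_pos_def_injective[OF posdef grad] .
  ultimately obtain \<rho> where "\<rho> > 0"
    and zeros: "\<And>x. x \<in> ball x0 \<rho> \<Longrightarrow> \<exists>y\<in>cball (0, l0) (l0 / 2). G (x, y) = 0"
    using regular_zero_persists \<open>l0 > 0\<close> half_gt_zero by blast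
  have "\<exists>p l. l > 0 \<and> subproblem_kkt gPsi g Q c x (p, l) = 0" if x: "x \<in> ball x0 \<rho>" for x
  proof -
    obtain p l where "(p, l) \<in> cball (0, l0) (l0 / 2)" and "G (x, p, l) = 0"
      using zeros[OF x] by auto
    moreover from this have "\<bar>l0 - l\<bar> \<le> l0 / 2"
      using dist_snd_le[of "(0, l0)" "(p, l)"] by (simp add: dist_real_def)
    then have "l > 0"
      using \<open>l0 > 0\<close> by linarith
    ultimately show ?thesis
      by (auto simp: G_def)
  qed
  with \<open>\<rho> > 0\<close> that show ?thesis
    by blast
qed

theorem lemma3:
  fixes \<Psi> :: "real ^'n \<Rightarrow> real"
    and gPsi :: "real ^'n \<Rightarrow> real ^'n"
    and HPsi :: "real ^'n \<Rightarrow> real ^'n ^'n"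
    and s :: "real ^'n \<Rightarrow> real ^'m"
    and J :: "real ^'n \<Rightarrow> real ^'n ^'m"
    and b :: "real ^'m"
    and \<sigma> :: real
    and xs :: "real ^'n" and lamS :: real
  assumes mn: "CARD('m) \<ge> CARD('n)"
    and convex: "convex_on UNIV \<Psi>"
    and dPsi: "\<And>x. (\<Psi> has_derivative (\<lambda>h. gPsi x \<bullet> h)) (at x)"
    and d2Psi: "\<And>x. (gPsi has_derivative (\<lambda>h. HPsi x *v h)) (at x)"
    and contH: "continuous_on UNIV HPsi"
    and ds: "\<And>x. (s has_derivative (\<lambda>h. J x *v h)) (at x)"
    and contJ: "continuous_on UNIV J"
    and sigma_pos: "\<sigma> > 0"
    and lam_pos: "lamS > 0"
    and kkt1: "gPsi xs + lamS *\<^sub>R (transpose (J xs) *v (s xs - b)) = 0"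
    and kkt2: "cfun s b \<sigma> xs = 0"
    and grad_nz: "transpose (J xs) *v (s xs - b) \<noteq> 0"
    and posdef: "pos_def_mat (HPsi xs + lamS *\<^sub>R (transpose (J xs) ** J xs))"
  shows "\<exists>\<rho>>0. \<forall>x\<in>ball xs \<rho>. \<exists>p lam. lam > 0 \<and>
           gPsi (x + p) + lam *\<^sub>R (transpose (J x) *v (s x - b) + (transpose (J x) ** J x) *v p) = 0 \<and>
           cfun s b \<sigma> x + (transpose (J x) *v (s x - b)) \<bullet> p
             + (1/2) * (p \<bullet> ((transpose (J x) ** J x) *v p)) = 0"
proof -
  define g where "g x = transpose (J x) *v (s x - b)" for x
  define Q where "Q x = transpose (J x) ** J x" for x
  have cont_s: "continuous_on UNIV s" and cont_gPsi: "continuous_on UNIV gPsi"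
    using ds d2Psi by (meson continuous_at_imp_continuous_on has_derivative_continuous)+
  have "continuous_on UNIV g" "continuous_on UNIV Q" "continuous_on UNIV (cfun s b \<sigma>)"
    unfolding g_def Q_def cfun_def [abs_def] by (intro continuous_intros contJ cont_s)+
  moreover have "subproblem_kkt gPsi g Q (cfun s b \<sigma>) xs (0, lamS) = 0"
    using kkt1 kkt2 by (simp add: subproblem_kkt_def g_def zero_prod_def)
  ultimately obtain \<rho> where "\<rho> > 0" and "\<And>x. x \<in> ball xs \<rho> \<Longrightarrow>
      \<exists>p l. l > 0 \<and> subproblem_kkt gPsi g Q (cfun s b \<sigma>) x (p, l) = 0"
    using subproblem_kkt_solvable_near[OF cont_gPsi _ _ _ d2Psi _ lam_pos] posdef grad_nz
    unfolding g_def Q_def by blast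
  then show ?thesis
    by (auto simp: subproblem_kkt_def g_def Q_def zero_prod_def)
qed

end
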